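(* Let $n$ be a nonnegative integer and let $a,b,c\in\mathbb{C}$ be such that all hypergeometric series and quotients below are defined (no lower parameter is zero or a negative integer). Then \[ {}_4F_3\!\left(\left.{-n,\frac{a}{2},\frac{a+1}{2},b \atop a,1+a-c,c}\right| 4\right) =\frac{(-1)^n(b)_n}{(1+a-c)_n}\, {}_4F_3\!\left(\left.{-n,\frac{c-b-n}{2},\frac{c-b-n+1}{2},c-a-n \atop c-b-n,1-b-n,c}\right| 4\right). \]
   Context: For $a\in\mathbb{C}$, $(a)_0=1$ and $(a)_k=a(a+1)\cdots(a+k-1)$ for $k\ge1$. The hypergeometric series is ${}_rF_s\!\left(\left.{\alpha_1,\ldots,\alpha_r\atop \beta_1,\ldots,\beta_s}\right|z\right)=\sum_{k\ge0}\frac{(\alpha_1)_k\cdots(\alpha_r)_k}{k!(\beta_1)_k\cdots(\beta_s)_k}z^k$, with no lower parameter zero or a negative integer; when an upper parameter is $-n$ ($n$ a nonnegative integer) it is a finite sum over $0\le k\le n$. *)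

theory Defs
  imports Complex_Main
begin

text \<open>Terminating hypergeometric series whose first upper parameter is \<open>-n\<close>:
  upper parameters \<open>-n, as\<close>, lower parameters \<open>bs\<close>, argument \<open>z\<close>;
  it is the finite sum over \<open>0 \<le> k \<le> n\<close> (all further terms vanish since \<open>(-n)_k = 0\<close> for \<open>k > n\<close>).\<close>
definition hypergeom_term :: "nat \<Rightarrow> complex list \<Rightarrow> complex list \<Rightarrow> complex \<Rightarrow> complex" where
  "hypergeom_term n as bs z =
     (\<Sum>k\<le>n. pochhammer (- of_nat n) k * prod_list (map (\<lambda>a. pochhammer a k) as)
              / (fact k * prod_list (map (\<lambda>b. pochhammer b k) bs)) * z ^ k)"

definition not_nonpos_int :: "complex \<Rightarrow> bool" where
  "not_nonpos_int x \<longleftrightarrow> (\<forall>m::nat. x \<noteq> - of_nat m)"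

end

theory Submission
  imports Defs "HOL-Computational_Algebra.Formal_Power_Series"
begin

text \<open>The duplication formula turns \<open>(a/2)\<^sub>k ((a+1)/2)\<^sub>k 4\<^sup>k / (a)\<^sub>k\<close> into \<open>(a+k)\<^sub>k\<close>,
  and Chu--Vandermonde writes \<open>(a+k)\<^sub>k / (c)\<^sub>k\<close> as a terminating \<open>\<^sub>2F\<^sub>1\<close> at \<open>1\<close>.
  Interchanging the two finite sums and applying Chu--Vandermonde once more to the
  inner sum leaves the single sum \<open>S(b, x, c) = vandermonde_reduced_sum n b x c\<close>
  with \<open>x = 1 + a - c\<close>. Reversing the Pochhammer symbols termwise shows that \<open>S\<close>
  changes only by the factor \<open>(-1)\<^sup>n (b)\<^sub>n / (x)\<^sub>n\<close> under
  \<open>(b, x) \<mapsto> (1 - x - n, 1 - b - n)\<close>, and this is exactly the change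
  of parameters relating the two \<open>\<^sub>4F\<^sub>3\<close> series.\<close>

lemma pochhammer_reflect_mult:
  fixes x :: "'a::comm_ring_1"
  assumes "j \<le> k"
  shows "pochhammer (1 - x - of_nat k) j * pochhammer x (k - j) = (-1) ^ j * pochhammer x k"
proof -
  have "pochhammer (1 - x - of_nat k) j = (-1) ^ j * pochhammer (x + of_nat (k - j)) j"
    using pochhammer_minus[of "x + of_nat k - 1" j] assms by (simp add: of_nat_diff algebra_simps)
  moreover have "pochhammer x k = pochhammer x (k - j) * pochhammer (x + of_nat (k - j)) j"
    using pochhammer_product'[of x "k - j" j] assms by simp
  ultimately show ?thesis by (simp add: mult_ac)
qed

lemma pochhammer_neg_of_nat_mult_fact:
  assumes "j \<le> k"
  shows "pochhammer (- of_nat k :: 'a::{comm_ring_1,semiring_char_0}) j * fact (k - j) = (-1) ^ j * fact k"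
  using pochhammer_reflect_mult[OF assms, of 1] by (simp add: pochhammer_fact)

lemma pochhammer_half_mult_pochhammer_half_plus:
  fixes a :: "'a::field_char_0"
  shows "pochhammer (a / 2) k * pochhammer ((a + 1) / 2) k * 4 ^ k
       = pochhammer a k * pochhammer (a + of_nat k) k"
proof -
  have "pochhammer a (2 * k) = of_nat (2 ^ (2 * k)) * pochhammer (a / 2) k * pochhammer (a / 2 + 1 / 2) k"
    using pochhammer_double[of "a / 2" k] by simp
  moreover have "pochhammer a (2 * k) = pochhammer a k * pochhammer (a + of_nat k) k"
    using pochhammer_product'[of a k k] by (simp add: mult_2)
  moreover have "(of_nat (2 ^ (2 * k)) :: 'a) = 4 ^ k"
    by (simp add: power_mult)
  moreover have "a / 2 + 1 / 2 = (a + 1) / 2"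
    by (simp add: add_divide_distrib)
  ultimately show ?thesis by (simp add: mult_ac)
qed

lemma sum_triangle_swap:
  fixes f :: "nat \<Rightarrow> nat \<Rightarrow> 'a::comm_monoid_add"
  shows "(\<Sum>k\<le>n. \<Sum>j\<le>k. f j (k - j)) = (\<Sum>j\<le>n. \<Sum>m\<le>n - j. f j m)"
proof -
  have "(\<Sum>k\<le>n. \<Sum>j\<le>k. f j (k - j)) = (\<Sum>(j, m)\<in>{(j, m). j + m \<le> n}. f j m)"
    by (rule sum.triangle_reindex_eq[symmetric])
  also have "{(j, m). j + m \<le> n} = Sigma {..n} (\<lambda>j. {..n - j})"
    by auto
  finally show ?thesis
    by (simp add: sum.Sigma)
qed

lemma chu_vandermonde:
  fixes a c :: "'a::field_char_0"
  assumes "pochhammer c k \<noteq> 0"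
  shows "(\<Sum>j\<le>k. pochhammer a j * pochhammer (- of_nat k) j / (fact j * pochhammer c j))
       = pochhammer (c - a) k / pochhammer c k"
  using Vandermonde_pochhammer[of k c a] assms
  by (simp add: atLeast0AtMost pochhammer_eq_0_iff)

lemma pochhammer_reflect_neg_of_nat_div:
  fixes x :: "'a::field_char_0"
  assumes "j \<le> k" and "pochhammer x k \<noteq> 0"
  shows "pochhammer (1 - x - of_nat k) j * pochhammer (- of_nat k) j / (fact k * pochhammer x k)
       = 1 / (fact (k - j) * pochhammer x (k - j))"
proof -
  have "pochhammer x (k - j) \<noteq> 0"
    using assms pochhammer_eq_0_mono[of x "k - j" k] by auto
  then have "pochhammer (1 - x - of_nat k) j * pochhammer (- of_nat k) j / (fact k * pochhammer x k)
      = (pochhammer (1 - x - of_nat k) j * pochhammer x (k - j)) * (pochhammer (- of_nat k) j * fact (k - j))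
        / (fact k * pochhammer x k) / (fact (k - j) * pochhammer x (k - j))"
    by (simp add: field_simps)
  also have "\<dots> = ((-1) ^ j * (-1) ^ j) / (fact (k - j) * pochhammer x (k - j))"
    using assms by (simp add: pochhammer_reflect_mult pochhammer_neg_of_nat_mult_fact)
  also have "((-1) ^ j * (-1) ^ j :: 'a) = 1"
    by (simp flip: power_mult_distrib)
  finally show ?thesis .
qed

lemma pochhammer_quotient_reflect:
  fixes b x :: "'a::field_char_0"
  assumes "j \<le> n" and "pochhammer x n \<noteq> 0" and "pochhammer (1 - b - of_nat n) n \<noteq> 0"
  shows "pochhammer b j / pochhammer x (n - j)
       = (-1) ^ n * pochhammer b n / pochhammer x n
         * (pochhammer (1 - x - of_nat n) j / pochhammer (1 - b - of_nat n) (n - j))"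
proof -
  have sq: "((-1) ^ j * (-1) ^ j :: 'a) = 1"
    by (simp flip: power_mult_distrib)
  have x_n: "pochhammer x n = (-1) ^ j * (pochhammer (1 - x - of_nat n) j * pochhammer x (n - j))"
    using pochhammer_reflect_mult[OF assms(1), of x] sq by (simp add: mult.assoc[symmetric])
  have b_n: "(-1) ^ n * pochhammer b n
      = (-1) ^ j * (pochhammer (1 - b - of_nat n) (n - j) * pochhammer b j)"
    using pochhammer_reflect_mult[of "n - j" n b] assms(1)
    by (simp add: power_add[symmetric])
  have "pochhammer (1 - x - of_nat n) j \<noteq> 0" "pochhammer x (n - j) \<noteq> 0"
    using assms(2) x_n by auto
  moreover have "pochhammer (1 - b - of_nat n) (n - j) \<noteq> 0"
    using assms(3) pochhammer_eq_0_mono[of "1 - b - of_nat n" "n - j" n] by auto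
  ultimately show ?thesis
    unfolding x_n b_n using sq by (simp add: field_simps)
qed

definition vandermonde_reduced_sum :: "nat \<Rightarrow> 'a \<Rightarrow> 'a \<Rightarrow> 'a \<Rightarrow> 'a::field_char_0" where
  "vandermonde_reduced_sum n b x c =
     (\<Sum>j\<le>n. pochhammer (- of_nat n) j * pochhammer b j * pochhammer (x - b - of_nat j) (n - j)
              / (fact j * pochhammer c j * pochhammer x (n - j)))"

lemma vandermonde_reduced_sum_reflect:
  fixes b x c :: "'a::field_char_0"
  assumes "pochhammer x n \<noteq> 0" and "pochhammer (1 - b - of_nat n) n \<noteq> 0"
  shows "vandermonde_reduced_sum n b x c
       = (-1) ^ n * pochhammer b n / pochhammer x n
         * vandermonde_reduced_sum n (1 - x - of_nat n) (1 - b - of_nat n) c"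
  unfolding vandermonde_reduced_sum_def sum_distrib_left
proof (rule sum.cong[OF refl], goal_cases)
  case (1 j)
  then have j: "j \<le> n" by simp
  have shift: "1 - b - of_nat n - (1 - x - of_nat n) - of_nat j = x - b - of_nat j"
    by simp
  have "pochhammer (- of_nat n) j * pochhammer b j * pochhammer (x - b - of_nat j) (n - j)
        / (fact j * pochhammer c j * pochhammer x (n - j))
      = pochhammer (- of_nat n) j * pochhammer (x - b - of_nat j) (n - j) / (fact j * pochhammer c j)
        * (pochhammer b j / pochhammer x (n - j))"
    by simp
  also have "\<dots> = pochhammer (- of_nat n) j * pochhammer (x - b - of_nat j) (n - j) / (fact j * pochhammer c j)
        * ((-1) ^ n * pochhammer b n / pochhammer x n
           * (pochhammer (1 - x - of_nat n) j / pochhammer (1 - b - of_nat n) (n - j)))"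
    by (simp only: pochhammer_quotient_reflect[OF j assms])
  finally show ?case
    unfolding shift by (simp add: mult_ac)
qed

lemma double_sum_eq_vandermonde_reduced_sum:
  fixes b x c :: "'a::field_char_0"
  assumes "pochhammer x n \<noteq> 0"
  shows "(\<Sum>j\<le>n. \<Sum>m\<le>n - j. pochhammer (- of_nat n) (j + m) * pochhammer b (j + m)
            / (fact j * pochhammer c j * (fact m * pochhammer x m)))
       = vandermonde_reduced_sum n b x c"
  unfolding vandermonde_reduced_sum_def
proof (rule sum.cong[OF refl], goal_cases)
  case (1 j)
  then have j: "j \<le> n" by simp
  have shift: "- of_nat n + of_nat j = (- of_nat (n - j) :: 'a)"
    using j by (simp add: of_nat_diff)
  have x_nz: "pochhammer x (n - j) \<noteq> 0"
    using assms pochhammer_eq_0_mono[of x "n - j" n] by auto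
  have "(\<Sum>m\<le>n - j. pochhammer (- of_nat n) (j + m) * pochhammer b (j + m)
            / (fact j * pochhammer c j * (fact m * pochhammer x m)))
      = pochhammer (- of_nat n) j * pochhammer b j / (fact j * pochhammer c j)
        * (\<Sum>m\<le>n - j. pochhammer (b + of_nat j) m * pochhammer (- of_nat (n - j)) m
                           / (fact m * pochhammer x m))"
    unfolding pochhammer_product' shift sum_distrib_left by (simp add: field_simps)
  also have "\<dots> = pochhammer (- of_nat n) j * pochhammer b j / (fact j * pochhammer c j)
        * (pochhammer (x - (b + of_nat j)) (n - j) / pochhammer x (n - j))"
    by (simp only: chu_vandermonde[OF x_nz])
  finally show ?case
    by (simp add: algebra_simps)
qed

lemma pochhammer_nonzero_if_not_nonpos_int:
  "not_nonpos_int y \<Longrightarrow> pochhammer y k \<noteq> 0"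
  unfolding not_nonpos_int_def pochhammer_eq_0_iff by auto

lemma hypergeom_quadratic_term_eq_sum:
  fixes a b c :: complex
  assumes "not_nonpos_int a" and "not_nonpos_int (1 + a - c)" and "not_nonpos_int c"
  shows "pochhammer (- of_nat n) k * prod_list (map (\<lambda>a. pochhammer a k) [a/2, (a+1)/2, b])
           / (fact k * prod_list (map (\<lambda>b. pochhammer b k) [a, 1 + a - c, c])) * 4 ^ k
       = (\<Sum>j\<le>k. pochhammer (- of_nat n) (j + (k - j)) * pochhammer b (j + (k - j))
           / (fact j * pochhammer c j * (fact (k - j) * pochhammer (1 + a - c) (k - j))))"
    (is "_ = (\<Sum>j\<le>k. ?term j)")
proof -
  define x where "x = 1 + a - c"
  have nz: "pochhammer a k \<noteq> 0" "pochhammer x k \<noteq> 0" "pochhammer c k \<noteq> 0"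
    using assms pochhammer_nonzero_if_not_nonpos_int unfolding x_def by auto
  have shift: "c - (1 - x - of_nat k) = a + of_nat k"
    unfolding x_def by simp
  have vandermonde: "pochhammer (a + of_nat k) k / pochhammer c k
      = (\<Sum>j\<le>k. pochhammer (1 - x - of_nat k) j * pochhammer (- of_nat k) j / (fact j * pochhammer c j))"
    using chu_vandermonde[OF nz(3), of "1 - x - of_nat k"] unfolding shift by simp
  have "pochhammer (- of_nat n) k * prod_list (map (\<lambda>a. pochhammer a k) [a/2, (a+1)/2, b])
           / (fact k * prod_list (map (\<lambda>b. pochhammer b k) [a, x, c])) * 4 ^ k
      = pochhammer (- of_nat n) k * pochhammer b k / (fact k * pochhammer x k)
        * (pochhammer (a + of_nat k) k / pochhammer c k)"
    using nz pochhammer_half_mult_pochhammer_half_plus[of a k] by (simp add: field_simps)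
  also have "\<dots> = (\<Sum>j\<le>k. pochhammer (- of_nat n) k * pochhammer b k / (fact j * pochhammer c j)
        * (pochhammer (1 - x - of_nat k) j * pochhammer (- of_nat k) j / (fact k * pochhammer x k)))"
    unfolding vandermonde sum_distrib_left by (simp add: field_simps)
  also have "\<dots> = (\<Sum>j\<le>k. ?term j)"
    unfolding x_def[symmetric]
    by (rule sum.cong) (simp_all add: pochhammer_reflect_neg_of_nat_div nz)
  finally show ?thesis
    unfolding x_def .
qed

lemma hypergeom_quadratic_eq_vandermonde_reduced_sum:
  fixes a b c :: complex
  assumes "not_nonpos_int a" and "not_nonpos_int (1 + a - c)" and "not_nonpos_int c"
  shows "hypergeom_term n [a/2, (a+1)/2, b] [a, 1 + a - c, c] 4
       = vandermonde_reduced_sum n b (1 + a - c) c"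
proof -
  let ?g = "\<lambda>j m. pochhammer (- of_nat n) (j + m) * pochhammer b (j + m)
                   / (fact j * pochhammer c j * (fact m * pochhammer (1 + a - c) m))"
  have "hypergeom_term n [a/2, (a+1)/2, b] [a, 1 + a - c, c] 4 = (\<Sum>k\<le>n. \<Sum>j\<le>k. ?g j (k - j))"
    unfolding hypergeom_term_def by (simp only: hypergeom_quadratic_term_eq_sum[OF assms])
  also have "\<dots> = (\<Sum>j\<le>n. \<Sum>m\<le>n - j. ?g j m)"
    by (rule sum_triangle_swap)
  also have "\<dots> = vandermonde_reduced_sum n b (1 + a - c) c"
    using double_sum_eq_vandermonde_reduced_sum pochhammer_nonzero_if_not_nonpos_int[OF assms(2)]
    by blast
  finally show ?thesis .
qed

theorem proposition3p3:
  fixes n :: nat and a b c :: complex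
  assumes "not_nonpos_int a" and "not_nonpos_int (1 + a - c)" and "not_nonpos_int c"
    and "not_nonpos_int (c - b - of_nat n)" and "not_nonpos_int (1 - b - of_nat n)"
  shows "hypergeom_term n [a/2, (a+1)/2, b] [a, 1 + a - c, c] 4
       = (-1) ^ n * pochhammer b n / pochhammer (1 + a - c) n
         * hypergeom_term n [(c - b - of_nat n)/2, (c - b - of_nat n + 1)/2, c - a - of_nat n]
                            [c - b - of_nat n, 1 - b - of_nat n, c] 4"
proof -
  have x_reflected: "1 + (c - b - of_nat n) - c = 1 - b - of_nat n"
    by simp
  have b_reflected: "1 - (1 + a - c) - of_nat n = c - a - of_nat n"
    by simp
  have "hypergeom_term n [a/2, (a+1)/2, b] [a, 1 + a - c, c] 4 = vandermonde_reduced_sum n b (1 + a - c) c"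
    by (rule hypergeom_quadratic_eq_vandermonde_reduced_sum[OF assms(1-3)])
  also have "\<dots> = (-1) ^ n * pochhammer b n / pochhammer (1 + a - c) n
      * vandermonde_reduced_sum n (c - a - of_nat n) (1 - b - of_nat n) c"
    unfolding b_reflected[symmetric]
    by (rule vandermonde_reduced_sum_reflect)
      (use assms(2,5) pochhammer_nonzero_if_not_nonpos_int in auto)
  also have "vandermonde_reduced_sum n (c - a - of_nat n) (1 - b - of_nat n) c
      = hypergeom_term n [(c - b - of_nat n)/2, (c - b - of_nat n + 1)/2, c - a - of_nat n]
                         [c - b - of_nat n, 1 - b - of_nat n, c] 4"
    using hypergeom_quadratic_eq_vandermonde_reduced_sum[of "c - b - of_nat n" c n "c - a - of_nat n"]
      assms(3-5)
    unfolding x_reflected by simp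
  finally show ?thesis .
qed

end
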